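(* Let $\omega,\gamma_+,\gamma_-,\gamma_z\in\mathbb{R}$ and let $\mathcal{L}^\ddagger:\mathcal{M}_2\to\mathcal{M}_2$ be $$\mathcal{L}^\ddagger(X)=\tfrac{i\omega}{2}[\sigma_z,X]+\gamma_+\Big(\sigma_-X\sigma_+-\tfrac12\{\sigma_-\sigma_+,X\}\Big)+\gamma_-\Big(\sigma_+X\sigma_--\tfrac12\{\sigma_+\sigma_-,X\}\Big)+\gamma_z(\sigma_zX\sigma_z-X).$$ Then $\mathcal{L}^\ddagger(X^2)-\mathcal{L}^\ddagger(X)X-X\mathcal{L}^\ddagger(X)\ge 0$ for all Hermitian $X\in\mathcal{M}_2$ if and only if $\gamma_\pm\ge 0$ and $\sqrt{\gamma_+\gamma_-}+2\gamma_z\ge 0$.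
   Context: $\sigma_x,\sigma_y,\sigma_z$ are the Pauli matrices, $\sigma_\pm=\frac12(\sigma_x\pm i\sigma_y)$, $[A,B]=AB-BA$, $\{A,B\}=AB+BA$; $\ge 0$ means positive semidefinite. *)

theory Defs
  imports "HOL-Analysis.Analysis"
begin

text \<open>2x2 complex matrices are modelled as complex^2^2; row/column indices 1, 2
  (in the type 2, with 2 = 0). Matrix product is (**).\<close>

type_synonym cmat2 = "complex^2^2"

definition cscale :: "complex \<Rightarrow> cmat2 \<Rightarrow> cmat2" where
  "cscale c M = (\<chi> i j. c * M$i$j)"

definition mat2 :: "complex \<Rightarrow> complex \<Rightarrow> complex \<Rightarrow> complex \<Rightarrow> cmat2" where
  "mat2 a b c d = (\<chi> i j. if i = 1 then (if j = 1 then a else b) else (if j = 1 then c else d))"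

definition sigma_x :: cmat2 where "sigma_x = mat2 0 1 1 0"
definition sigma_y :: cmat2 where "sigma_y = mat2 0 (- \<i>) \<i> 0"
definition sigma_z :: cmat2 where "sigma_z = mat2 1 0 0 (-1)"
definition sigma_plus :: cmat2 where "sigma_plus = cscale (1/2) (sigma_x + cscale \<i> sigma_y)"
definition sigma_minus :: cmat2 where "sigma_minus = cscale (1/2) (sigma_x - cscale \<i> sigma_y)"

definition commutator :: "cmat2 \<Rightarrow> cmat2 \<Rightarrow> cmat2" where
  "commutator A B = A ** B - B ** A"
definition anticommutator :: "cmat2 \<Rightarrow> cmat2 \<Rightarrow> cmat2" where
  "anticommutator A B = A ** B + B ** A"

definition adjoint2 :: "cmat2 \<Rightarrow> cmat2" where
  "adjoint2 A = (\<chi> i j. cnj (A$j$i))"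

definition hermitian2 :: "cmat2 \<Rightarrow> bool" where
  "hermitian2 A \<longleftrightarrow> adjoint2 A = A"

definition psd2 :: "cmat2 \<Rightarrow> bool" where
  "psd2 A \<longleftrightarrow> (\<forall>v::complex^2. let q = (\<Sum>i\<in>UNIV. \<Sum>j\<in>UNIV. cnj (v$i) * A$i$j * v$j)
                  in Im q = 0 \<and> Re q \<ge> 0)"

definition Ldag :: "real \<Rightarrow> real \<Rightarrow> real \<Rightarrow> real \<Rightarrow> cmat2 \<Rightarrow> cmat2" where
  "Ldag \<omega> gp gm gz X =
     cscale (\<i> * of_real \<omega> / 2) (commutator sigma_z X)
   + cscale (of_real gp) (sigma_minus ** X ** sigma_plus
        - cscale (1/2) (anticommutator (sigma_minus ** sigma_plus) X))
   + cscale (of_real gm) (sigma_plus ** X ** sigma_minus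
        - cscale (1/2) (anticommutator (sigma_plus ** sigma_minus) X))
   + cscale (of_real gz) (sigma_z ** X ** sigma_z - X)"

end

theory Submission
  imports Defs
begin

text \<open>
  Write a Hermitian \<open>X = [[a, b], [b\<^sup>*, d]]\<close>, put \<open>s = |b|\<^sup>2\<close>, \<open>t = a - d\<close> and
  \<open>g = \<gamma>\<^sub>+ + \<gamma>\<^sub>- + 4\<gamma>\<^sub>z\<close>. A direct computation gives
  \<open>L(X\<^sup>2) - L(X)X - XL(X) = [[g s + \<gamma>\<^sub>- t\<^sup>2, (\<gamma>\<^sub>- - \<gamma>\<^sub>+) t b], [c.c., g s + \<gamma>\<^sub>+ t\<^sup>2]]\<close>,
  which is positive semidefinite iff its diagonal and its determinant
  \<open>g\<^sup>2 s\<^sup>2 + (g(\<gamma>\<^sub>+ + \<gamma>\<^sub>-) - (\<gamma>\<^sub>- - \<gamma>\<^sub>+)\<^sup>2) s t\<^sup>2 + \<gamma>\<^sub>+\<gamma>\<^sub>- t\<^sup>4\<close> are nonnegative.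
  As \<open>(s, t)\<close> ranges over \<open>[0, \<infinity>) \<times> \<real>\<close>, this holds iff \<open>\<gamma>\<^sub>\<plusminus> \<ge> 0\<close>, \<open>g \<ge> 0\<close> and the middle
  coefficient is at least \<open>-2g\<surd>(\<gamma>\<^sub>+\<gamma>\<^sub>-)\<close>. Since
  \<open>(\<gamma>\<^sub>- - \<gamma>\<^sub>+)\<^sup>2 = (\<surd>\<gamma>\<^sub>+ - \<surd>\<gamma>\<^sub>-)\<^sup>2 (\<surd>\<gamma>\<^sub>+ + \<surd>\<gamma>\<^sub>-)\<^sup>2\<close>, that says
  \<open>(\<surd>\<gamma>\<^sub>+ - \<surd>\<gamma>\<^sub>-)\<^sup>2 \<le> g\<close>, i.e. \<open>\<surd>(\<gamma>\<^sub>+\<gamma>\<^sub>-) + 2\<gamma>\<^sub>z \<ge> 0\<close>.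
\<close>

lemma mat2_nth [simp]:
  "mat2 a b c d $ 1 $ 1 = a" "mat2 a b c d $ 1 $ 2 = b"
  "mat2 a b c d $ 2 $ 1 = c" "mat2 a b c d $ 2 $ 2 = d"
  by (simp_all add: mat2_def exhaust_2)

lemma mat2_eq_iff: "mat2 a b c d = mat2 a' b' c' d' \<longleftrightarrow> a = a' \<and> b = b' \<and> c = c' \<and> d = d'"
  by (metis mat2_nth)

lemma mat2_cases: "X = mat2 (X$1$1) (X$1$2) (X$2$1) (X$2$2)"
  by (simp add: vec_eq_iff forall_2)

lemma mat2_mult [simp]:
  "mat2 a b c d ** mat2 a' b' c' d' = mat2 (a*a' + b*c') (a*b' + b*d') (c*a' + d*c') (c*b' + d*d')"
  by (simp add: vec_eq_iff forall_2 matrix_matrix_mult_def sum_2)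

lemma mat2_add [simp]: "mat2 a b c d + mat2 a' b' c' d' = mat2 (a + a') (b + b') (c + c') (d + d')"
  by (simp add: vec_eq_iff forall_2)

lemma mat2_diff [simp]: "mat2 a b c d - mat2 a' b' c' d' = mat2 (a - a') (b - b') (c - c') (d - d')"
  by (simp add: vec_eq_iff forall_2)

lemma cscale_mat2 [simp]: "cscale k (mat2 a b c d) = mat2 (k*a) (k*b) (k*c) (k*d)"
  by (simp add: vec_eq_iff forall_2 cscale_def)

lemma sigma_plus_mat2: "sigma_plus = mat2 0 1 0 0"
  and sigma_minus_mat2: "sigma_minus = mat2 0 0 1 0"
  by (simp_all add: sigma_plus_def sigma_minus_def sigma_x_def sigma_y_def)

lemma hermitian2_iff: "hermitian2 X \<longleftrightarrow> (\<exists>a b d. X = mat2 (of_real a) b (cnj b) (of_real d))"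
proof
  assume "hermitian2 X"
  have entry: "cnj (X$j$i) = X$i$j" for i j
    by (metis (no_types) \<open>hermitian2 X\<close> adjoint2_def hermitian2_def vec_lambda_beta)
  have "X = mat2 (of_real (Re (X$1$1))) (X$1$2) (cnj (X$1$2)) (of_real (Re (X$2$2)))"
    using entry[of 1 1] entry[of 2 2] entry[of 1 2]
    by (subst mat2_cases) (simp add: mat2_eq_iff complex_eq_iff)
  then show "\<exists>a b d. X = mat2 (of_real a) b (cnj b) (of_real d)" by blast
next
  assume "\<exists>a b d. X = mat2 (of_real a) b (cnj b) (of_real d)"
  then show "hermitian2 X"
    by (elim exE) (simp add: hermitian2_def adjoint2_def vec_eq_iff forall_2)
qed

lemma quadratic_form_hermitian2:
  "cnj v * of_real A * v + cnj v * B * w + (cnj w * cnj B * v + cnj w * of_real D * w)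
     = of_real (A * (cmod v)\<^sup>2 + D * (cmod w)\<^sup>2 + 2 * Re (cnj v * B * w))"
  unfolding cmod_power2 by (simp add: complex_eq_iff power2_eq_square algebra_simps)

lemma psd2_hermitian_mat2:
  "psd2 (mat2 (of_real A) B (cnj B) (of_real D)) \<longleftrightarrow>
     (\<forall>v w. 0 \<le> A * (cmod v)\<^sup>2 + D * (cmod w)\<^sup>2 + 2 * Re (cnj v * B * w))"
proof -
  have "psd2 (mat2 (of_real A) B (cnj B) (of_real D)) \<longleftrightarrow>
     (\<forall>u::complex^2. 0 \<le> A * (cmod (u$1))\<^sup>2 + D * (cmod (u$2))\<^sup>2 + 2 * Re (cnj (u$1) * B * u$2))"
    by (simp add: psd2_def sum_2 quadratic_form_hermitian2 del: of_real_add of_real_mult)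
  also have "\<dots> \<longleftrightarrow> (\<forall>v w. 0 \<le> A * (cmod v)\<^sup>2 + D * (cmod w)\<^sup>2 + 2 * Re (cnj v * B * w))"
    by (metis vector_2)
  finally show ?thesis .
qed

lemma psd2_hermitian_iff:
  "psd2 (mat2 (of_real A) B (cnj B) (of_real D)) \<longleftrightarrow> 0 \<le> A \<and> 0 \<le> D \<and> (cmod B)\<^sup>2 \<le> A * D"
  unfolding psd2_hermitian_mat2
proof (intro iffI conjI allI)
  assume q: "\<forall>v w. 0 \<le> A * (cmod v)\<^sup>2 + D * (cmod w)\<^sup>2 + 2 * Re (cnj v * B * w)"
  show A: "0 \<le> A" using q[rule_format, of 1 0] by simp
  show D: "0 \<le> D" using q[rule_format, of 0 1] by simp
  have A_det: "0 \<le> A * (A * D - (cmod B)\<^sup>2)"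
    using q[rule_format, of "- B" "of_real A"]
    by (simp add: cmod_power2) (simp add: power2_eq_square algebra_simps)
  have D_det: "0 \<le> D * (A * D - (cmod B)\<^sup>2)"
    using q[rule_format, of "of_real D" "- cnj B"]
    by (simp add: cmod_power2) (simp add: power2_eq_square algebra_simps)
  have offdiag_bound: "0 \<le> A * (cmod B)\<^sup>2 + D - 2 * (cmod B)\<^sup>2"
    using q[rule_format, of "- B" 1]
    by (simp add: cmod_power2) (simp add: power2_eq_square algebra_simps)
  show "(cmod B)\<^sup>2 \<le> A * D"
  proof (cases "A = 0 \<and> D = 0")
    case True
    then show ?thesis using offdiag_bound by simp
  next
    case False
    then have "0 < A \<or> 0 < D" using A D by linarith
    then show ?thesis using A_det D_det by (auto simp: zero_le_mult_iff)
  qed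
next
  fix v w
  assume "0 \<le> A \<and> 0 \<le> D \<and> (cmod B)\<^sup>2 \<le> A * D"
  then have A: "0 \<le> A" and D: "0 \<le> D" and det: "(cmod B)\<^sup>2 \<le> A * D" by auto
  have "\<bar>Re (cnj v * B * w)\<bar> \<le> cmod v * cmod B * cmod w"
    by (metis abs_Re_le_cmod complex_mod_cnj norm_mult)
  also have "\<dots> \<le> cmod v * (sqrt A * sqrt D) * cmod w"
  proof -
    have "cmod B \<le> sqrt A * sqrt D" using det by (simp add: real_le_rsqrt flip: real_sqrt_mult)
    then show ?thesis by (simp add: mult_left_mono mult_right_mono)
  qed
  also have "\<dots> \<le> (A * (cmod v)\<^sup>2 + D * (cmod w)\<^sup>2) / 2"
    using sum_squares_bound[of "sqrt A * cmod v" "sqrt D * cmod w"] A D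
    by (simp add: power_mult_distrib algebra_simps)
  finally have "- Re (cnj v * B * w) \<le> (A * (cmod v)\<^sup>2 + D * (cmod w)\<^sup>2) / 2"
    by (rule abs_le_D2)
  then show "0 \<le> A * (cmod v)\<^sup>2 + D * (cmod w)\<^sup>2 + 2 * Re (cnj v * B * w)"
    by (simp add: field_simps)
qed

definition dissipation :: "(cmat2 \<Rightarrow> cmat2) \<Rightarrow> cmat2 \<Rightarrow> cmat2" where
  "dissipation L X = L (X ** X) - L X ** X - X ** L X"

lemma dissipation_Ldag_hermitian:
  fixes gp gm gz a d :: real and b :: complex
  defines "g \<equiv> gp + gm + 4 * gz" and "s \<equiv> (cmod b)\<^sup>2" and "t \<equiv> a - d"
  shows "dissipation (Ldag \<omega> gp gm gz) (mat2 (of_real a) b (cnj b) (of_real d)) =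
    mat2 (of_real (g * s + gm * t\<^sup>2)) (of_real ((gm - gp) * t) * b)
         (cnj (of_real ((gm - gp) * t) * b)) (of_real (g * s + gp * t\<^sup>2))"
  unfolding dissipation_def Ldag_def commutator_def anticommutator_def
    sigma_z_def sigma_plus_mat2 sigma_minus_mat2
  by (cases b)
    (simp add: mat2_eq_iff g_def s_def t_def complex_eq_iff cmod_def power2_eq_square field_simps)

lemma psd2_dissipation_Ldag_iff:
  fixes gp gm gz a d :: real and b :: complex
  defines "g \<equiv> gp + gm + 4 * gz" and "s \<equiv> (cmod b)\<^sup>2" and "t \<equiv> a - d"
  shows "psd2 (dissipation (Ldag \<omega> gp gm gz) (mat2 (of_real a) b (cnj b) (of_real d))) \<longleftrightarrow>
    0 \<le> g * s + gm * t\<^sup>2 \<and> 0 \<le> g * s + gp * t\<^sup>2 \<and>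
    (gm - gp)\<^sup>2 * t\<^sup>2 * s \<le> (g * s + gm * t\<^sup>2) * (g * s + gp * t\<^sup>2)"
  unfolding dissipation_Ldag_hermitian psd2_hermitian_iff
  by (simp add: g_def s_def t_def norm_mult power_mult_distrib del: of_real_diff)

lemma all_hermitian_psd2_dissipation_Ldag_iff:
  fixes gp gm gz :: real
  defines "g \<equiv> gp + gm + 4 * gz"
  shows "(\<forall>X. hermitian2 X \<longrightarrow> psd2 (dissipation (Ldag \<omega> gp gm gz) X)) \<longleftrightarrow>
    (\<forall>s t. 0 \<le> s \<longrightarrow> 0 \<le> g * s + gm * t\<^sup>2 \<and> 0 \<le> g * s + gp * t\<^sup>2 \<and>
       (gm - gp)\<^sup>2 * t\<^sup>2 * s \<le> (g * s + gm * t\<^sup>2) * (g * s + gp * t\<^sup>2))"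
  (is "?psd \<longleftrightarrow> (\<forall>s t. 0 \<le> s \<longrightarrow> ?conds s t)")
proof
  assume ?psd
  show "\<forall>s t. 0 \<le> s \<longrightarrow> ?conds s t"
  proof (intro allI impI)
    fix s t :: real
    assume "0 \<le> s"
    have "hermitian2 (mat2 (of_real t) (of_real (sqrt s)) (cnj (of_real (sqrt s))) (of_real 0))"
      unfolding hermitian2_iff by blast
    with \<open>?psd\<close> have "psd2 (dissipation (Ldag \<omega> gp gm gz)
      (mat2 (of_real t) (of_real (sqrt s)) (cnj (of_real (sqrt s))) (of_real 0)))" by blast
    then show "?conds s t"
      unfolding psd2_dissipation_Ldag_iff using \<open>0 \<le> s\<close> by (simp add: g_def)
  qed
next
  assume "\<forall>s t. 0 \<le> s \<longrightarrow> ?conds s t"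
  then show ?psd by (auto simp: hermitian2_iff psd2_dissipation_Ldag_iff g_def)
qed

lemma quadratic_nonneg_on_nonneg_imp_linear_coeff:
  fixes a b c :: real
  assumes a: "0 \<le> a" and c: "0 \<le> c"
    and nonneg: "\<And>u. 0 \<le> u \<Longrightarrow> 0 \<le> a * u\<^sup>2 + b * u + c"
  shows "- 2 * sqrt (a * c) \<le> b"
proof (rule ccontr)
  assume "\<not> ?thesis"
  then have b: "b < - 2 * sqrt a * sqrt c" by (simp add: real_sqrt_mult)
  moreover have "0 \<le> 2 * sqrt a * sqrt c" using a c by simp
  ultimately have "b < 0" by linarith
  consider "a = 0" | "0 < a" "c = 0" | "0 < a" "0 < c" using a c by linarith
  then show False
  proof cases
    case 1
    define u where "u = (c + 1) / - b"
    have "0 \<le> u" using c \<open>b < 0\<close> unfolding u_def by (intro divide_nonneg_pos) auto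
    moreover have "b * u = - (c + 1)" using \<open>b < 0\<close> by (simp add: u_def)
    ultimately show False using nonneg[of u] 1 by simp
  next
    case 2
    define u where "u = - b / (2 * a)"
    have "0 \<le> u" using 2 \<open>b < 0\<close> unfolding u_def by (intro divide_nonneg_pos) auto
    moreover have "a * u\<^sup>2 + b * u = - b\<^sup>2 / (4 * a)"
      using 2 by (simp add: u_def field_simps power2_eq_square)
    moreover have "0 < b\<^sup>2 / (4 * a)" using 2 \<open>b < 0\<close> by simp
    ultimately show False using nonneg[of u] 2 by simp
  next
    case 3
    define u where "u = sqrt c / sqrt a"
    have "a * u\<^sup>2 = c" using 3 by (simp add: u_def power_divide)
    moreover have "b * u < - 2 * c"
      using mult_strict_right_mono[OF b, of u] 3 by (simp add: u_def)
    moreover have "0 \<le> u" using 3 by (simp add: u_def)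
    ultimately show False using nonneg[of u] by linarith
  qed
qed

lemma sqrt_diff_square_le_iff:
  fixes p m g :: real
  assumes p: "0 \<le> p" and m: "0 \<le> m" and g: "0 \<le> g"
  shows "(sqrt p - sqrt m)\<^sup>2 \<le> g \<longleftrightarrow> (m - p)\<^sup>2 \<le> g * (sqrt p + sqrt m)\<^sup>2"
proof -
  have "m - p = (sqrt m - sqrt p) * (sqrt p + sqrt m)"
    using p m by (simp add: algebra_simps flip: power2_eq_square)
  then have sq: "(m - p)\<^sup>2 = (sqrt p - sqrt m)\<^sup>2 * (sqrt p + sqrt m)\<^sup>2"
    by (simp add: power_mult_distrib power2_commute)
  show ?thesis
  proof (cases "sqrt p + sqrt m = 0")
    case True
    then have "p = 0" "m = 0" using p m by (simp_all add: add_nonneg_eq_0_iff)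
    then show ?thesis using g by simp
  next
    case False
    then show ?thesis unfolding sq by (simp add: mult_le_cancel_right_pos)
  qed
qed

lemma dissipation_psd_conditions_sufficient:
  fixes g p m s t :: real
  assumes p: "0 \<le> p" and m: "0 \<le> m" and g: "(sqrt p - sqrt m)\<^sup>2 \<le> g" and s: "0 \<le> s"
  shows "0 \<le> g * s + m * t\<^sup>2 \<and> 0 \<le> g * s + p * t\<^sup>2 \<and>
    (m - p)\<^sup>2 * t\<^sup>2 * s \<le> (g * s + m * t\<^sup>2) * (g * s + p * t\<^sup>2)"
proof (intro conjI)
  have "0 \<le> g" using g order_trans zero_le_power2 by blast
  then show "0 \<le> g * s + m * t\<^sup>2" "0 \<le> g * s + p * t\<^sup>2" using p m s by simp_all
  define q where "q = sqrt p * sqrt m"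
  have q2: "q\<^sup>2 = p * m" using p m by (simp add: q_def power_mult_distrib)
  have "(sqrt p + sqrt m)\<^sup>2 = p + m + 2 * q" using p m by (simp add: q_def power2_sum)
  then have middle: "0 \<le> g * (p + m + 2 * q) - (m - p)\<^sup>2"
    using sqrt_diff_square_le_iff[OF p m \<open>0 \<le> g\<close>] g by simp
  have "(g * s + m * t\<^sup>2) * (g * s + p * t\<^sup>2) - (m - p)\<^sup>2 * t\<^sup>2 * s
      = (g * s - q * t\<^sup>2)\<^sup>2 + (g * (p + m + 2 * q) - (m - p)\<^sup>2) * (s * t\<^sup>2)"
    using q2 by algebra
  also have "0 \<le> \<dots>" using middle s by simp
  finally show "(m - p)\<^sup>2 * t\<^sup>2 * s \<le> (g * s + m * t\<^sup>2) * (g * s + p * t\<^sup>2)" by simp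
qed

lemma dissipation_psd_conditions_necessary:
  fixes g p m :: real
  assumes conds: "\<And>u. 0 \<le> u \<Longrightarrow>
    0 \<le> g * u + m \<and> 0 \<le> g * u + p \<and> (m - p)\<^sup>2 * u \<le> (g * u + m) * (g * u + p)"
  shows "0 \<le> p \<and> 0 \<le> m \<and> (sqrt p - sqrt m)\<^sup>2 \<le> g"
proof (intro conjI)
  show p: "0 \<le> p" and m: "0 \<le> m" using conds[of 0] by simp_all
  have "- 2 * sqrt (0 * m) \<le> g"
    by (rule quadratic_nonneg_on_nonneg_imp_linear_coeff) (use conds m in auto)
  then have g: "0 \<le> g" by simp
  have "- 2 * sqrt (g\<^sup>2 * (p * m)) \<le> g * (p + m) - (m - p)\<^sup>2"
  proof (rule quadratic_nonneg_on_nonneg_imp_linear_coeff)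
    fix u :: real
    assume "0 \<le> u"
    then have "0 \<le> (g * u + m) * (g * u + p) - (m - p)\<^sup>2 * u" using conds by simp
    then show "0 \<le> g\<^sup>2 * u\<^sup>2 + (g * (p + m) - (m - p)\<^sup>2) * u + p * m"
      by (simp add: power2_eq_square algebra_simps)
  qed (use p m in simp_all)
  moreover have "sqrt (g\<^sup>2 * (p * m)) = g * sqrt p * sqrt m" using g by (simp add: real_sqrt_mult)
  moreover have "(sqrt p + sqrt m)\<^sup>2 = p + m + 2 * sqrt p * sqrt m" using p m by (simp add: power2_sum)
  ultimately have "(m - p)\<^sup>2 \<le> g * (sqrt p + sqrt m)\<^sup>2" by (simp add: algebra_simps)
  then show "(sqrt p - sqrt m)\<^sup>2 \<le> g" using sqrt_diff_square_le_iff[OF p m g] by simp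
qed

lemma dissipation_psd_conditions_iff:
  fixes g p m :: real
  shows "(\<forall>s t. 0 \<le> s \<longrightarrow> 0 \<le> g * s + m * t\<^sup>2 \<and> 0 \<le> g * s + p * t\<^sup>2 \<and>
            (m - p)\<^sup>2 * t\<^sup>2 * s \<le> (g * s + m * t\<^sup>2) * (g * s + p * t\<^sup>2))
         \<longleftrightarrow> 0 \<le> p \<and> 0 \<le> m \<and> (sqrt p - sqrt m)\<^sup>2 \<le> g"
proof
  assume conds: "\<forall>s t. 0 \<le> s \<longrightarrow> 0 \<le> g * s + m * t\<^sup>2 \<and> 0 \<le> g * s + p * t\<^sup>2 \<and>
    (m - p)\<^sup>2 * t\<^sup>2 * s \<le> (g * s + m * t\<^sup>2) * (g * s + p * t\<^sup>2)"
  show "0 \<le> p \<and> 0 \<le> m \<and> (sqrt p - sqrt m)\<^sup>2 \<le> g"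
    by (rule dissipation_psd_conditions_necessary) (use conds[rule_format, of _ 1] in simp)
qed (use dissipation_psd_conditions_sufficient in blast)

theorem mainTheorem7:
  fixes \<omega> gp gm gz :: real
  shows "(\<forall>X. hermitian2 X \<longrightarrow>
            psd2 (Ldag \<omega> gp gm gz (X ** X) - Ldag \<omega> gp gm gz X ** X - X ** Ldag \<omega> gp gm gz X))
         \<longleftrightarrow> (gp \<ge> 0 \<and> gm \<ge> 0 \<and> sqrt (gp * gm) + 2 * gz \<ge> 0)"
proof -
  have "(\<forall>X. hermitian2 X \<longrightarrow>
            psd2 (Ldag \<omega> gp gm gz (X ** X) - Ldag \<omega> gp gm gz X ** X - X ** Ldag \<omega> gp gm gz X))
     \<longleftrightarrow> (\<forall>X. hermitian2 X \<longrightarrow> psd2 (dissipation (Ldag \<omega> gp gm gz) X))"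
    by (simp add: dissipation_def)
  also have "\<dots> \<longleftrightarrow> 0 \<le> gp \<and> 0 \<le> gm \<and> (sqrt gp - sqrt gm)\<^sup>2 \<le> gp + gm + 4 * gz"
    unfolding all_hermitian_psd2_dissipation_Ldag_iff dissipation_psd_conditions_iff ..
  also have "\<dots> \<longleftrightarrow> gp \<ge> 0 \<and> gm \<ge> 0 \<and> sqrt (gp * gm) + 2 * gz \<ge> 0"
  proof -
    have "(sqrt gp - sqrt gm)\<^sup>2 = gp + gm - 2 * sqrt (gp * gm)" if "0 \<le> gp" "0 \<le> gm"
      using that by (simp add: power2_diff real_sqrt_mult)
    then show ?thesis by auto
  qed
  finally show ?thesis .
qed

end
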